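(* Let $u=u_1u_2\cdots u_t\in\{b,d\}^+$ be a nonempty word containing $i$ copies of $b$ and $j$ copies of $d$, and write $au(n)$ for $a(u_1(u_2(\cdots u_t(n)\cdots)))$ (similarly $ab(n)=a(b(n))$). Then for all $n\ge 1$, $$au(n)=F_{i+2j}\cdot ab(n)+F_{i+2j-1}\cdot a(n)+C(u)\cdot(2x(n)-1),$$ where $C(u)$ is defined recursively by $C(b)=0$, $C(d)=1$, and, for a nonempty word $v$ (with $i,j$ still the letter counts of $u$), $C(vb)=F_{i+2j-1}+C(v)$ if $u=vb$, and $C(vd)=F_{i+2j-1}-C(v)$ if $u=vd$.
   Context: $\varphi=(1+\sqrt5)/2$. Let $(F_n)_{n\ge 0}$ be the Fibonacci numbers: $F_0=0$, $F_1=1$, $F_n=F_{n-1}+F_{n-2}$ for $n\ge 2$. Define $(a(n))_{n\ge 0}$ (OEIS A105774) by $a(0)=0$, $a(1)=1$, and for $n\ge 2$, $a(n)=F_{j+1}-a(n-F_j)$, where $j\ge 2$ is the unique index with $F_j<n\le F_{j+1}$. Let $b(n)=\lfloor \varphi n\rfloor$, $d(n)=\lfloor\varphi^2 n\rfloor$, and $x(n)=a(b(n))-b(a(n))$. *)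

theory Defs
  imports Complex_Main "HOL-Number_Theory.Fib"
begin

definition phi :: real where "phi = (1 + sqrt 5) / 2"

lemma fib_Suc_ge: "k \<le> fib (Suc k)"
proof (induction k rule: nat_less_induct)
  case (1 k)
  show ?case
  proof (cases "k < 2")
    case True then show ?thesis by (cases k) (auto simp: numeral_2_eq_2 less_Suc_eq)
  next
    case False
    then obtain m where k: "k = m + 2" using le_add_diff_inverse2 by (metis not_less)
    have "m + 1 \<le> fib (Suc (m+1))" using 1 k by auto
    moreover have "1 \<le> fib (Suc m)" using fib_neq_0_nat[of "Suc m"] by simp
    moreover have "fib (Suc k) = fib (Suc (m+1)) + fib (Suc m)"
      using fib_plus_2[of "Suc m"] k by simp
    ultimately show ?thesis using k by simp
  qed
qed

definition fibidx :: "nat \<Rightarrow> nat" where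
  "fibidx n = (THE j. 2 \<le> j \<and> fib j < n \<and> n \<le> fib (Suc j))"

lemma fibidx_ex1:
  assumes "2 \<le> n"
  shows "\<exists>!j. 2 \<le> j \<and> fib j < n \<and> n \<le> fib (Suc j)"
proof -
  let ?P = "\<lambda>k. 2 \<le> k \<and> n \<le> fib (Suc k)"
  have ex: "?P (n + 2)" using fib_Suc_ge[of "n+2"] by simp
  define j where "j = (LEAST k. ?P k)"
  have Pj: "?P j" unfolding j_def by (rule LeastI[of ?P, OF ex])
  have lt: "fib j < n"
  proof (cases "j = 2")
    case True then show ?thesis using assms by simp
  next
    case False
    then have "2 \<le> j - 1" "Suc (j - 1) = j" using Pj by auto
    moreover have "\<not> ?P (j - 1)"
      using not_less_Least[of "j - 1" ?P] Pj unfolding j_def[symmetric] by auto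
    ultimately show ?thesis by auto
  qed
  show ?thesis
  proof (rule ex1I[of _ j])
    show "2 \<le> j \<and> fib j < n \<and> n \<le> fib (Suc j)" using Pj lt by auto
  next
    fix j' assume h: "2 \<le> j' \<and> fib j' < n \<and> n \<le> fib (Suc j')"
    show "j' = j"
    proof (rule ccontr)
      assume "j' \<noteq> j"
      then have "j' < j \<or> j < j'" by auto
      then show False
      proof
        assume "j' < j" then have "fib (Suc j') \<le> fib j" by (intro fib_mono) simp
        then show False using h lt by simp
      next
        assume "j < j'" then have "fib (Suc j) \<le> fib j'" by (intro fib_mono) simp
        then show False using h Pj by simp
      qed
    qed
  qed
qed

lemma fibidx_prop:
  assumes "2 \<le> n"
  shows "2 \<le> fibidx n \<and> fib (fibidx n) < n \<and> n \<le> fib (Suc (fibidx n))"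
  unfolding fibidx_def using theI'[OF fibidx_ex1[OF assms]] .

text \<open>OEIS A105774, indexed by naturals, values as integers.\<close>
function aN :: "nat \<Rightarrow> int" where
  "aN n = (if n = 0 then 0 else if n = 1 then 1
           else int (fib (Suc (fibidx n))) - aN (n - fib (fibidx n)))"
  by auto
termination
proof (relation "measure id")
  fix n :: nat assume "\<not> n = 0" "\<not> n = 1"
  then have "2 \<le> n" by simp
  from fibidx_prop[OF this] have "0 < fib (fibidx n)" using fib_neq_0_nat by auto
  then show "(n - fib (fibidx n), n) \<in> measure id" using \<open>2 \<le> n\<close> by simp
qed simp

declare aN.simps [simp del]

text \<open>All maps are taken on integers (arguments are always nonnegative in use).\<close>
definition a :: "int \<Rightarrow> int" where "a n = aN (nat n)"
definition b :: "int \<Rightarrow> int" where "b n = \<lfloor>phi * of_int n\<rfloor>"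
definition d :: "int \<Rightarrow> int" where "d n = \<lfloor>phi^2 * of_int n\<rfloor>"
definition x :: "int \<Rightarrow> int" where "x n = a (b n) - b (a n)"

datatype letter = LB | LD

fun letter_fun :: "letter \<Rightarrow> int \<Rightarrow> int" where
  "letter_fun LB = b" | "letter_fun LD = d"

fun word_fun :: "letter list \<Rightarrow> int \<Rightarrow> int" where
  "word_fun [] n = n"
| "word_fun (c # w) n = letter_fun c (word_fun w n)"

definition nb :: "letter list \<Rightarrow> nat" where "nb u = count_list u LB"
definition nd :: "letter list \<Rightarrow> nat" where "nd u = count_list u LD"

text \<open>C on the reversed word: Crev (c # w) = C(rev w @ [c]).\<close>
fun Crev :: "letter list \<Rightarrow> int" where
  "Crev [] = 0"
| "Crev [LB] = 0"
| "Crev [LD] = 1"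
| "Crev (LB # w) = int (fib (nb (LB # w) + 2 * nd (LB # w) - 1)) + Crev w"
| "Crev (LD # w) = int (fib (nb (LD # w) + 2 * nd (LD # w) - 1)) - Crev w"

definition C :: "letter list \<Rightarrow> int" where "C u = Crev (rev u)"

end

theory Submission imports Defs begin

text \<open>Write \<open>n - 1 = F\<^sub>j\<^sub>1 + \<dots> + F\<^sub>j\<^sub>r\<close> in Zeckendorf form
  (\<open>j\<^sub>1 > \<dots> > j\<^sub>r \<ge> 2\<close>, gaps at least 2). Unwinding the recursion, \<open>a n\<close> is the
  alternating sum \<open>F\<^sub>j\<^sub>1\<^sub>+\<^sub>1 - F\<^sub>j\<^sub>2\<^sub>+\<^sub>1 + \<dots> \<plusminus> 1\<close>. Since
  \<open>\<phi> F\<^sub>j = F\<^sub>j\<^sub>+\<^sub>1 - \<psi>\<^sup>j\<close> with \<open>\<bar>\<psi>\<bar> < 1\<close>, the map \<open>b\<close> shifts every index by one,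
  \<open>d = b + id\<close> shifts by two and appends the index 2, and the small error terms also give
  \<open>2 x n - 1 = -(-1)\<^sup>r\<close>. Hence \<open>a (b (b n))\<close>, \<open>a (d n)\<close>, \<open>a (b (d n))\<close> and the signs
  at \<open>b n\<close>, \<open>d n\<close> are fixed integer combinations of \<open>a (b n)\<close>, \<open>a n\<close> and
  \<open>2 x n - 1\<close>; the theorem follows by induction on the word, peeling off its innermost
  letter, with the Fibonacci recurrence producing the coefficients.\<close>

lemma fib_Suc_eq_add_pred: "1 \<le> j \<Longrightarrow> fib (Suc j) = fib j + fib (j - 1)"
  using fib_plus_2[of "j - 1"] by (simp add: numeral_2_eq_2)

lemma fibidx_eqI:
  assumes "2 \<le> j" "fib j < n" "n \<le> fib (Suc j)"
  shows "fibidx n = j"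
proof -
  have "0 < fib j" using assms(1) by (simp add: fib_neq_0_nat)
  then have "2 \<le> n" using assms(2) by simp
  then show ?thesis
    unfolding fibidx_def by (rule the1_equality[OF fibidx_ex1]) (use assms in auto)
qed

definition zeckendorf :: "nat list \<Rightarrow> bool" where
  "zeckendorf L \<longleftrightarrow> sorted_wrt (\<lambda>i j. j + 2 \<le> i) L \<and> (\<forall>i\<in>set L. 2 \<le> i)"

lemma zeckendorf_Cons:
  "zeckendorf (j # L) \<longleftrightarrow> zeckendorf L \<and> 2 \<le> j \<and> (\<forall>i\<in>set L. i + 2 \<le> j)"
  unfolding zeckendorf_def by auto

lemma zeckendorf_map_Suc: "zeckendorf L \<Longrightarrow> zeckendorf (map Suc L)"
  unfolding zeckendorf_def by (auto simp: sorted_wrt_map elim: sorted_wrt_mono_rel[rotated])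

lemma zeckendorf_shift_append_2: "zeckendorf L \<Longrightarrow> zeckendorf (map ((+) 2) L @ [2])"
  unfolding zeckendorf_def
  by (auto simp: sorted_wrt_append sorted_wrt_map elim: sorted_wrt_mono_rel[rotated])

lemma sum_fib_zeckendorf_less:
  "zeckendorf (j # L) \<Longrightarrow> (\<Sum>i\<leftarrow>j # L. fib i) < fib (Suc j)"
proof (induction L arbitrary: j)
  case Nil
  then have "2 \<le> j" by (simp add: zeckendorf_Cons)
  then show ?case using fib_Suc_eq_add_pred[of j] fib_neq_0_nat[of "j - 1"] by simp
next
  case (Cons j' L)
  then have "zeckendorf (j' # L)" "j' + 2 \<le> j"
    by (auto simp: zeckendorf_Cons)
  moreover from this have "fib (Suc j') \<le> fib (j - 1)" by (intro fib_mono) simp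
  ultimately show ?case using Cons.IH fib_Suc_eq_add_pred[of j] by fastforce
qed

text \<open>Greedy construction: take the largest Fibonacci number not exceeding \<open>m\<close>, which is
  \<open>fib (fibidx (m + 1))\<close>; the remainder is smaller than the previous Fibonacci number.\<close>
lemma zeckendorf_exists: "\<exists>L. zeckendorf L \<and> (\<Sum>i\<leftarrow>L. fib i) = m"
proof (induction m rule: less_induct)
  case (less m)
  show ?case
  proof (cases "m = 0")
    case True
    then show ?thesis by (intro exI[of _ "[]"]) (simp add: zeckendorf_def)
  next
    case False
    define j where "j = fibidx (m + 1)"
    have j: "2 \<le> j" "fib j \<le> m" "m < fib (Suc j)"
      using fibidx_prop[of "m + 1"] False unfolding j_def by auto
    then have "0 < fib j" by (simp add: fib_neq_0_nat)
    then obtain L where L: "zeckendorf L" "(\<Sum>i\<leftarrow>L. fib i) = m - fib j"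
      using less.IH[of "m - fib j"] False by auto
    have "i + 2 \<le> j" if "i \<in> set L" for i
    proof -
      have "fib i \<le> (\<Sum>i\<leftarrow>L. fib i)"
        using that member_le_sum_list[of "fib i" "map fib L"] by simp
      then have "fib i < fib (j - 1)" using L j fib_Suc_eq_add_pred[of j] by simp
      then show ?thesis using fib_mono[of "j - 1" i] by linarith
    qed
    then have "zeckendorf (j # L)" using L j by (simp add: zeckendorf_Cons)
    moreover have "(\<Sum>i\<leftarrow>j # L. fib i) = m" using L j by simp
    ultimately show ?thesis by blast
  qed
qed

fun alt_sum :: "(nat \<Rightarrow> 'a::ab_group_add) \<Rightarrow> nat list \<Rightarrow> 'a" where
  "alt_sum f [] = 0"
| "alt_sum f (j # L) = f j - alt_sum f L"

lemma alt_sum_add: "alt_sum (\<lambda>j. f j + g j) L = alt_sum f L + alt_sum g L"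
  by (induction L) (auto simp: algebra_simps)

lemma alt_sum_diff: "alt_sum (\<lambda>j. f j - g j) L = alt_sum f L - alt_sum g L"
  by (induction L) (auto simp: algebra_simps)

lemma mult_alt_sum:
  fixes f :: "nat \<Rightarrow> 'a::ring"
  shows "c * alt_sum f L = alt_sum (\<lambda>j. c * f j) L"
  by (induction L) (auto simp: algebra_simps)

lemma of_int_alt_sum: "of_int (alt_sum f L) = alt_sum (\<lambda>j. of_int (f j)) L"
  by (induction L) auto

lemma alt_sum_map: "alt_sum f (map g L) = alt_sum (\<lambda>j. f (g j)) L"
  by (induction L) auto

lemma alt_sum_append:
  "alt_sum f (L @ [j]) = alt_sum f L + (-1 :: 'a::ring_1) ^ length L * f j"
  by (induction L) (auto simp: algebra_simps)

lemma abs_alt_sum_le: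
  fixes f :: "nat \<Rightarrow> 'a::ordered_ab_group_add_abs"
  shows "\<bar>alt_sum f L\<bar> \<le> (\<Sum>j\<leftarrow>L. \<bar>f j\<bar>)"
proof (induction L)
  case (Cons j L)
  then show ?case
    using abs_triangle_ineq4[of "f j" "alt_sum f L"] by (simp add: add_left_mono order_trans)
qed simp

lemma alt_sum_fib_rec:
  "alt_sum (\<lambda>j. int (fib (j + k + 2))) L
     = alt_sum (\<lambda>j. int (fib (j + k + 1))) L + alt_sum (\<lambda>j. int (fib (j + k))) L"
  by (simp add: fib_plus_2 flip: alt_sum_add)

lemma aN_zeckendorf:
  "zeckendorf L \<Longrightarrow>
     aN ((\<Sum>i\<leftarrow>L. fib i) + 1) = alt_sum (\<lambda>j. int (fib (Suc j))) L + (-1) ^ length L"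
proof (induction L)
  case Nil
  then show ?case by (simp add: aN.simps)
next
  case (Cons j L)
  then have "zeckendorf L" "2 \<le> j" by (auto simp: zeckendorf_Cons)
  have "fibidx ((\<Sum>i\<leftarrow>j # L. fib i) + 1) = j"
    using sum_fib_zeckendorf_less[OF Cons.prems] \<open>2 \<le> j\<close> fib_neq_0_nat[of j]
    by (intro fibidx_eqI) auto
  then have "aN ((\<Sum>i\<leftarrow>j # L. fib i) + 1) = int (fib (Suc j)) - aN ((\<Sum>i\<leftarrow>L. fib i) + 1)"
    using \<open>2 \<le> j\<close> fib_neq_0_nat[of j] by (subst aN.simps) simp
  then show ?case using Cons.IH[OF \<open>zeckendorf L\<close>] by simp
qed

lemma a_int: "a (int m) = aN m"
  by (simp add: a_def)

definition psi :: real where "psi = 1 - phi"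

lemma phi_square: "phi\<^sup>2 = phi + 1"
  unfolding phi_def by (simp add: power2_eq_square field_simps)

lemma psi_square: "psi\<^sup>2 = psi + 1"
  using phi_square unfolding psi_def by (simp add: power2_eq_square algebra_simps)

lemma phi_bounds: "3/2 < phi" "phi < 2"
proof -
  have "1 < sqrt 5 \<and> 2 < sqrt (5::real) \<and> sqrt (5::real) < 3"
    by (simp add: real_less_rsqrt real_less_lsqrt)
  then show "3/2 < phi" "phi < 2" unfolding phi_def by auto
qed

lemma abs_psi: "\<bar>psi\<bar> = phi - 1"
  using phi_bounds unfolding psi_def by simp

lemma abs_psi_square: "\<bar>psi\<bar>\<^sup>2 = 2 - phi"
  using phi_square unfolding abs_psi by (simp add: power2_eq_square algebra_simps)

lemma abs_psi_pow_add: "\<bar>psi\<bar> ^ Suc k + \<bar>psi\<bar> ^ Suc (Suc k) = \<bar>psi\<bar> ^ k"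
proof -
  have "\<bar>psi\<bar> + \<bar>psi\<bar>\<^sup>2 = 1"
    using abs_psi_square abs_psi by simp
  then have "\<bar>psi\<bar> ^ k * (\<bar>psi\<bar> + \<bar>psi\<bar>\<^sup>2) = \<bar>psi\<bar> ^ k" by simp
  then show ?thesis by (simp add: power2_eq_square algebra_simps del: abs_mult_self_eq)
qed

lemma phi_mult_fib: "phi * real (fib k) = real (fib (Suc k)) - psi ^ k"
proof (induction k rule: fib.induct)
  case (3 k)
  have "psi ^ Suc (Suc k) = psi ^ k * (psi + 1)"
    using psi_square by (simp add: power2_eq_square)
  then show ?case using 3 by (simp add: algebra_simps)
qed (simp_all add: psi_def)

text \<open>The tail of a sum of powers of \<open>\<bar>psi\<bar>\<close> with gaps at least 2 is bounded by
  the geometric series \<open>\<bar>psi\<bar>^(k+1) + \<bar>psi\<bar>^(k+3) + \<dots> = \<bar>psi\<bar>^k\<close>.\<close>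
lemma sum_abs_psi_pow_le:
  assumes "sorted_wrt (\<lambda>i j. j + 2 \<le> i) (j # L)" "\<forall>i\<in>set (j # L). k < i"
  shows "(\<Sum>i\<leftarrow>j # L. \<bar>psi\<bar> ^ i) \<le> \<bar>psi\<bar> ^ k - \<bar>psi\<bar> ^ Suc j"
  using assms
proof (induction L arbitrary: j)
  case Nil
  have "\<bar>psi\<bar> ^ (j - 1) \<le> \<bar>psi\<bar> ^ k"
    using Nil phi_bounds abs_psi by (intro power_decreasing) auto
  then show ?case using Nil abs_psi_pow_add[of "j - 1"] by simp
next
  case (Cons j' L)
  have "j' + 2 \<le> j" using Cons.prems by auto
  then have "\<bar>psi\<bar> ^ (j - 1) \<le> \<bar>psi\<bar> ^ Suc j'"
    using phi_bounds abs_psi by (intro power_decreasing) auto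
  moreover have "(\<Sum>i\<leftarrow>j' # L. \<bar>psi\<bar> ^ i) \<le> \<bar>psi\<bar> ^ k - \<bar>psi\<bar> ^ Suc j'"
    using Cons by simp
  ultimately show ?case using abs_psi_pow_add[of "j - 1"] \<open>j' + 2 \<le> j\<close> by simp
qed

lemma sum_abs_psi_pow_less:
  assumes "sorted_wrt (\<lambda>i j. j + 2 \<le> i) L" "\<forall>i\<in>set L. k < i"
  shows "(\<Sum>i\<leftarrow>L. \<bar>psi\<bar> ^ i) < \<bar>psi\<bar> ^ k"
proof (cases L)
  case Nil
  then show ?thesis using phi_bounds abs_psi by simp
next
  case (Cons j L')
  have "0 < \<bar>psi\<bar> ^ Suc j" using phi_bounds abs_psi by simp
  then show ?thesis using sum_abs_psi_pow_le assms Cons by fastforce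
qed

lemma sum_psi_pow_zeckendorf_bounds:
  assumes "zeckendorf L"
  shows "phi - 2 < (\<Sum>i\<leftarrow>L. psi ^ i) \<and> (\<Sum>i\<leftarrow>L. psi ^ i) \<le> phi - 1"
proof -
  have abs_sum: "\<bar>\<Sum>i\<leftarrow>M. psi ^ i\<bar> \<le> (\<Sum>i\<leftarrow>M. \<bar>psi\<bar> ^ i)" for M
    using sum_list_abs[of "map (\<lambda>i. psi ^ i) M"] by (simp add: o_def power_abs)
  have sorted: "sorted_wrt (\<lambda>i j. j + 2 \<le> i) L" and ge2: "\<forall>i\<in>set L. 2 \<le> i"
    using assms by (auto simp: zeckendorf_def)
  show ?thesis
  proof (cases "2 \<in> set L")
    case False
    then have "\<forall>i\<in>set L. 2 < i" using ge2 le_neq_implies_less by blast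
    then have "\<bar>\<Sum>i\<leftarrow>L. psi ^ i\<bar> < \<bar>psi\<bar>\<^sup>2"
      using order_le_less_trans[OF abs_sum sum_abs_psi_pow_less[OF sorted]] by blast
    then show ?thesis using abs_psi_square phi_bounds by (auto simp: abs_less_iff)
  next
    case True
    then obtain xs ys where L: "L = xs @ 2 # ys" by (meson split_list)
    then have "ys = []" using sorted ge2 by (cases ys) (auto simp: sorted_wrt_append)
    then have "\<forall>i\<in>set xs. 3 < i" "sorted_wrt (\<lambda>i j. j + 2 \<le> i) xs"
      using sorted L by (auto simp: sorted_wrt_append)
    then have "\<bar>\<Sum>i\<leftarrow>xs. psi ^ i\<bar> < \<bar>psi\<bar> ^ 3"
      using order_le_less_trans[OF abs_sum sum_abs_psi_pow_less[of xs 3]] by blast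
    moreover have "(\<Sum>i\<leftarrow>L. psi ^ i) = (\<Sum>i\<leftarrow>xs. psi ^ i) + \<bar>psi\<bar>\<^sup>2"
      using L \<open>ys = []\<close> by simp
    moreover have "\<bar>psi\<bar>\<^sup>2 + \<bar>psi\<bar> ^ 3 = phi - 1" "\<bar>psi\<bar> ^ 3 < \<bar>psi\<bar>\<^sup>2"
      using abs_psi_pow_add[of 1] abs_psi phi_bounds
      by (auto simp: numeral_eq_Suc intro: power_strict_decreasing)
    ultimately show ?thesis using phi_bounds by (auto simp: abs_less_iff)
  qed
qed

lemma b_zeckendorf:
  assumes "zeckendorf L"
  shows "b (int ((\<Sum>i\<leftarrow>L. fib i) + 1)) = int ((\<Sum>i\<leftarrow>map Suc L. fib i) + 1)"
proof -
  have "phi * real ((\<Sum>i\<leftarrow>L. fib i) + 1)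
      = real (\<Sum>i\<leftarrow>map Suc L. fib i) + (phi - (\<Sum>i\<leftarrow>L. psi ^ i))"
    by (induction L) (auto simp: algebra_simps phi_mult_fib)
  then show ?thesis
    using sum_psi_pow_zeckendorf_bounds[OF assms] unfolding b_def by (simp add: floor_eq_iff)
qed

lemma x_zeckendorf:
  assumes "zeckendorf L"
  shows "2 * x (int ((\<Sum>i\<leftarrow>L. fib i) + 1)) - 1 = - ((-1) ^ length L)"
proof -
  define n where "n = int ((\<Sum>i\<leftarrow>L. fib i) + 1)"
  define s where "s = (-1 :: int) ^ length L"
  define A1 where "A1 = alt_sum (\<lambda>j. int (fib (Suc j))) L"
  define A2 where "A2 = alt_sum (\<lambda>j. int (fib (Suc (Suc j)))) L"
  define E where "E = alt_sum (\<lambda>j. psi ^ Suc j) L"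
  have an: "a n = A1 + s"
    unfolding n_def A1_def s_def a_int using aN_zeckendorf[OF assms] .
  have abn: "a (b n) = A2 + s"
    using aN_zeckendorf[OF zeckendorf_map_Suc[OF assms]]
    unfolding n_def A2_def s_def b_zeckendorf[OF assms] a_int by (simp add: alt_sum_map o_def)
  have "phi * real_of_int A1 = real_of_int A2 - E"
    unfolding A1_def A2_def E_def
    by (simp add: of_int_alt_sum mult_alt_sum phi_mult_fib alt_sum_diff)
  then have "phi * of_int (a n) = of_int A2 + (s * phi - E)"
    unfolding an by (simp add: algebra_simps)
  then have ban: "b (a n) = A2 + \<lfloor>s * phi - E\<rfloor>"
    unfolding b_def by simp
  have "(\<Sum>i\<leftarrow>map Suc L. \<bar>psi\<bar> ^ i) < \<bar>psi\<bar>\<^sup>2"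
    using assms zeckendorf_map_Suc[OF assms] by (intro sum_abs_psi_pow_less) (auto simp: zeckendorf_def)
  then have "\<bar>E\<bar> < 2 - phi"
    using abs_alt_sum_le[of "\<lambda>j. psi ^ Suc j" L] abs_psi_square
    unfolding E_def by (simp add: o_def power_abs abs_mult)
  then have "\<lfloor>s * phi - E\<rfloor> = (if even (length L) then 1 else -2)"
    using phi_bounds unfolding s_def by (auto simp: floor_eq_iff abs_less_iff)
  then show ?thesis
    unfolding x_def n_def[symmetric] abn ban s_def by simp
qed

lemma d_eq_b_add: "d n = b n + n"
proof -
  have "phi\<^sup>2 * of_int n = phi * of_int n + of_int n"
    using phi_square by (simp add: algebra_simps)
  then show ?thesis unfolding d_def b_def by simp
qed

lemma b_ge: "0 \<le> n \<Longrightarrow> n \<le> b n"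
  using phi_bounds unfolding b_def by (simp add: le_floor_iff mult_le_cancel_right1)

lemma d_zeckendorf:
  assumes "zeckendorf L"
  shows "d (int ((\<Sum>i\<leftarrow>L. fib i) + 1)) = int ((\<Sum>i\<leftarrow>map ((+) 2) L @ [2]. fib i) + 1)"
proof -
  have "(\<Sum>i\<leftarrow>map ((+) 2) L. fib i) = (\<Sum>i\<leftarrow>map Suc L. fib i) + (\<Sum>i\<leftarrow>L. fib i)"
    by (induction L) (simp_all add: numeral_2_eq_2)
  then show ?thesis unfolding d_eq_b_add b_zeckendorf[OF assms] by simp
qed

lemma zeckendorf_of_pos:
  fixes n :: int
  assumes "1 \<le> n"
  obtains L where "zeckendorf L" "n = int ((\<Sum>i\<leftarrow>L. fib i) + 1)"
proof -
  obtain L where "zeckendorf L" "(\<Sum>i\<leftarrow>L. fib i) = nat (n - 1)"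
    using zeckendorf_exists by blast
  then show ?thesis using that assms by force
qed

lemma a_x_b_d_identities:
  fixes n :: int
  assumes "1 \<le> n"
  shows "a (b (b n)) = a (b n) + a n + (2 * x n - 1)"
    and "a (d n) = a (b n) + a n + (2 * x n - 1)"
    and "a (b (d n)) = 2 * a (b n) + a n + (2 * x n - 1)"
    and "2 * x (b n) - 1 = 2 * x n - 1"
    and "2 * x (d n) - 1 = - (2 * x n - 1)"
proof -
  obtain L where L: "zeckendorf L" and n: "n = int ((\<Sum>i\<leftarrow>L. fib i) + 1)"
    using zeckendorf_of_pos[OF assms] .
  define L2 where "L2 = map ((+) 2) L @ [2]"
  have L1: "zeckendorf (map Suc L)" using zeckendorf_map_Suc[OF L] .
  have L2: "zeckendorf L2" using zeckendorf_shift_append_2[OF L] unfolding L2_def .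
  note zeck = L L1 zeckendorf_map_Suc[OF L1] L2 zeckendorf_map_Suc[OF L2]
  have bn: "b n = int ((\<Sum>i\<leftarrow>map Suc L. fib i) + 1)"
    unfolding n by (rule b_zeckendorf[OF L])
  have bbn: "b (b n) = int ((\<Sum>i\<leftarrow>map Suc (map Suc L). fib i) + 1)"
    unfolding bn by (rule b_zeckendorf[OF L1])
  have dn: "d n = int ((\<Sum>i\<leftarrow>L2. fib i) + 1)"
    unfolding n d_zeckendorf[OF L] L2_def ..
  have bdn: "b (d n) = int ((\<Sum>i\<leftarrow>map Suc L2. fib i) + 1)"
    unfolding dn by (rule b_zeckendorf[OF L2])
  let ?s = "(-1 :: int) ^ length L"
  let ?A = "\<lambda>k. alt_sum (\<lambda>j. int (fib (j + k))) L"
  have "a n = ?A 1 + ?s"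
    using aN_zeckendorf[OF zeck(1)] unfolding n a_int by simp
  moreover have "a (b n) = ?A 2 + ?s"
    using aN_zeckendorf[OF zeck(2)] unfolding bn a_int by (simp add: alt_sum_map)
  moreover have "a (b (b n)) = ?A 3 + ?s"
    using aN_zeckendorf[OF zeck(3)] unfolding bbn a_int by (simp add: alt_sum_map eval_nat_numeral)
  moreover have "a (d n) = ?A 3 + ?s"
    using aN_zeckendorf[OF zeck(4)] unfolding dn a_int
    by (simp add: L2_def alt_sum_map alt_sum_append eval_nat_numeral)
  moreover have "a (b (d n)) = ?A 4 + 2 * ?s"
    using aN_zeckendorf[OF zeck(5)] unfolding bdn a_int
    by (simp add: L2_def alt_sum_map alt_sum_append eval_nat_numeral)
  moreover have "2 * x n - 1 = - ?s"
    unfolding n by (rule x_zeckendorf[OF L])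
  moreover have "2 * x (b n) - 1 = - ?s"
    unfolding bn using x_zeckendorf[OF L1] by simp
  moreover have "2 * x (d n) - 1 = ?s"
    unfolding dn using x_zeckendorf[OF L2] by (simp add: L2_def)
  moreover have "?A 3 = ?A 2 + ?A 1" "?A 4 = ?A 3 + ?A 2"
    using alt_sum_fib_rec[of 1 L] alt_sum_fib_rec[of 2 L] by (simp_all add: eval_nat_numeral)
  ultimately show "a (b (b n)) = a (b n) + a n + (2 * x n - 1)"
    and "a (d n) = a (b n) + a n + (2 * x n - 1)"
    and "a (b (d n)) = 2 * a (b n) + a n + (2 * x n - 1)"
    and "2 * x (b n) - 1 = 2 * x n - 1"
    and "2 * x (d n) - 1 = - (2 * x n - 1)"
    by simp_all
qed

lemma b_pos: "1 \<le> n \<Longrightarrow> 1 \<le> b n"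
  using b_ge[of n] by simp

lemma d_pos: "1 \<le> n \<Longrightarrow> 1 \<le> d n"
  using b_pos[of n] d_eq_b_add[of n] by simp

lemma a_comp_b:
  assumes "\<And>m. 1 \<le> m \<Longrightarrow> a (w m) = P * a (b m) + Q * a m + R * (2 * x m - 1)"
    and "1 \<le> n"
  shows "a (w (b n)) = (P + Q) * a (b n) + P * a n + (P + R) * (2 * x n - 1)"
proof -
  have "a (w (b n)) = P * a (b (b n)) + Q * a (b n) + R * (2 * x (b n) - 1)"
    using assms(1)[OF b_pos[OF assms(2)]] .
  then show ?thesis
    unfolding a_x_b_d_identities(1,4)[OF assms(2)] by (simp add: algebra_simps)
qed

lemma a_comp_d:
  assumes "\<And>m. 1 \<le> m \<Longrightarrow> a (w m) = P * a (b m) + Q * a m + R * (2 * x m - 1)"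
    and "1 \<le> n"
  shows "a (w (d n)) = (2 * P + Q) * a (b n) + (P + Q) * a n + (P + Q - R) * (2 * x n - 1)"
proof -
  have "a (w (d n)) = P * a (b (d n)) + Q * a (d n) + R * (2 * x (d n) - 1)"
    using assms(1)[OF d_pos[OF assms(2)]] .
  then show ?thesis
    unfolding a_x_b_d_identities(2,3,5)[OF assms(2)] by (simp add: algebra_simps)
qed

lemma Crev_Cons_LB: "Crev (LB # w) = int (fib (nb w + 2 * nd w)) + Crev w"
  by (cases w) (simp_all add: nb_def nd_def)

lemma Crev_Cons_LD: "Crev (LD # w) = int (fib (nb w + 2 * nd w + 1)) - Crev w"
  by (cases w) (simp_all add: nb_def nd_def)

lemma C_snoc_LB: "C (v @ [LB]) = int (fib (nb v + 2 * nd v)) + C v"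
  unfolding C_def by (simp add: Crev_Cons_LB nb_def nd_def)

lemma C_snoc_LD: "C (v @ [LD]) = int (fib (nb v + 2 * nd v + 1)) - C v"
  unfolding C_def by (simp add: Crev_Cons_LD nb_def nd_def)

lemma word_fun_snoc: "word_fun (v @ [c]) n = word_fun v (letter_fun c n)"
  by (induction v) auto

text \<open>The coefficient \<open>fib (k + 1) - fib k\<close> of \<open>a n\<close> equals \<open>fib (k - 1)\<close> for
  \<open>k \<ge> 1\<close> and is \<open>1\<close> for \<open>k = 0\<close>, so the empty word can serve as the induction base.\<close>
lemma a_word_fun:
  "1 \<le> n \<Longrightarrow> a (word_fun u n) = int (fib (nb u + 2 * nd u)) * a (b n)
     + (int (fib (Suc (nb u + 2 * nd u))) - int (fib (nb u + 2 * nd u))) * a n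
     + C u * (2 * x n - 1)"
proof (induction u arbitrary: n rule: rev_induct)
  case Nil
  then show ?case by (simp add: C_def nb_def nd_def)
next
  case (snoc c v)
  define k where "k = nb v + 2 * nd v"
  have fib_k: "int (fib (k + 2)) = int (fib (k + 1)) + int (fib k)"
    by (simp add: fib_plus_2)
  show ?case
  proof (cases c)
    case LB
    have "nb (v @ [c]) + 2 * nd (v @ [c]) = k + 1"
      unfolding k_def LB by (simp add: nb_def nd_def)
    then show ?thesis
      using a_comp_b[OF snoc.IH snoc.prems] fib_k
      unfolding LB word_fun_snoc C_snoc_LB k_def[symmetric] by (simp add: algebra_simps)
  next
    case LD
    have "int (fib (k + 3)) = int (fib (k + 2)) + int (fib (k + 1))"
      by (simp add: eval_nat_numeral)
    moreover have "nb (v @ [c]) + 2 * nd (v @ [c]) = k + 2"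
      unfolding k_def LD by (simp add: nb_def nd_def)
    ultimately show ?thesis
      using a_comp_d[OF snoc.IH snoc.prems] fib_k
      unfolding LD word_fun_snoc C_snoc_LD k_def[symmetric] by (simp add: algebra_simps)
  qed
qed

theorem theorem23:
  fixes u :: "letter list" and i j n :: nat
  assumes "u \<noteq> []" and "i = nb u" and "j = nd u" and "1 \<le> n"
  shows "a (word_fun u (int n)) =
           int (fib (i + 2 * j)) * a (b (int n))
         + int (fib (i + 2 * j - 1)) * a (int n)
         + C u * (2 * x (int n) - 1)"
proof -
  obtain c w where "u = c # w" using assms(1) by (cases u) auto
  then have "1 \<le> i + 2 * j"
    using assms(2,3) by (cases c) (simp_all add: nb_def nd_def)
  then have "int (fib (Suc (i + 2 * j))) - int (fib (i + 2 * j)) = int (fib (i + 2 * j - 1))"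
    using fib_Suc_eq_add_pred by simp
  then show ?thesis
    using a_word_fun[of "int n" u] assms(2-4) by simp
qed

end
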